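(* Consider the noiseless least squares deterministic dynamics under AdaGrad-Norm$(b,\eta)$ described in the context, in the regime $d\to\infty$. Assume that, for some $C>0$, the number of eigenvalues of $K$ below $C$ is $o(d)$, that $\langle X^\star,\omega_i\rangle=O(d^{-1/2})$ for all $i$, and that $X_0=0$. Then there exists some $\tilde\gamma>0$ such that $\gamma_t>\tilde\gamma$ for all $t>0$.
   Context: Noiseless least squares: $\mathcal R(X)=\frac12(X-X^\star)^TK(X-X^\star)$, $K\in\mathbb R^{d\times d}$ positive semidefinite with $\|K\|_{op}$ bounded independently of $d$, eigenpairs $(\lambda_i,\omega_i)$. Deterministic dynamics: $D_i^2(0)=d\langle X_0-X^\star,\omega_i\rangle^2$, $\frac{d}{dt}D_i^2(t)=-2\gamma_t\lambda_iD_i^2(t)+2\gamma_t^2\lambda_iR(t)$, $R(t)=\frac1{2d}\sum_i\lambda_iD_i^2(t)$, with AdaGrad-Norm learning rate $\gamma_t=\eta\big/\sqrt{b^2+\frac{2\mathrm{Tr}(K)}{d}\int_0^tR(s)\,ds}$, $b,\eta>0$. *)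

theory Defs
  imports "HOL-Analysis.Analysis" "Jordan_Normal_Form.Matrix"
begin

text \<open>Risk in the spectral coordinates:
  R(t) = 1/(2d) * sum_i lambda_i * D_i^2(t).  Here Dsq i t stands for D_i^2(t).\<close>
definition risk :: "nat \<Rightarrow> (nat \<Rightarrow> real) \<Rightarrow> (nat \<Rightarrow> real \<Rightarrow> real) \<Rightarrow> real \<Rightarrow> real" where
  "risk d lam Dsq t = (1 / (2 * real d)) * (\<Sum>i<d. lam i * Dsq i t)"

definition mat_trace :: "real mat \<Rightarrow> real" where
  "mat_trace A = (\<Sum>i<dim_row A. A $$ (i, i))"

definition adagrad_norm_lr :: "real \<Rightarrow> real \<Rightarrow> real \<Rightarrow> nat \<Rightarrow> (real \<Rightarrow> real) \<Rightarrow> real \<Rightarrow> real" where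
  "adagrad_norm_lr eta b trK d R t =
     eta / sqrt (b\<^sup>2 + (2 * trK / real d) * integral {0..t} R)"

end

theory Submission
  imports Defs "Jordan_Normal_Form.Determinant"
begin

(* Fix d and put T = Tr K / d.  The accumulator G(t) = b^2 + 2 T int_0^t R satisfies
   gamma_t = eta / sqrt G, G' = 2 T R and, since sum_i lambda_i D_i^2 = 2 d R,
   (mean_i D_i^2)' = -4 gamma R + 2 gamma^2 T R.  Hence the energy
     E = T mean_i D_i^2 + 4 eta sqrt G - eta^2 T ln G
   is conserved.  A Gronwall argument for the squared negative parts, continued along the
   half-line, shows D_i^2 >= 0, so G >= b^2 and mean_i D_i^2 >= 0.  Bounding ln sqrt G by its
   tangent at b + eta L, conservation gives
     2 eta sqrt G <= L mean_i D_i^2(0) + 2 eta^2 L ln (1 + eta L / b) + 4 eta b,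
   where L bounds the spectrum of K.  With X_0 = 0 and <X*, omega_i> = O(d^(-1/2)) the
   initial mean is O(1), so gamma_t is bounded below uniformly in d. *)

no_notation vec_nth (infixl "$" 90)

section \<open>Calculus on the half-line\<close>

lemma negpart_sq_taylor:
  fixes x y :: real
  shows "\<bar>(min y 0)\<^sup>2 - (min x 0)\<^sup>2 - 2 * min x 0 * (y - x)\<bar> \<le> (y - x)\<^sup>2"
proof -
  have xy: "x * y \<le> 0" if "(x \<le> 0) \<noteq> (y \<le> 0)"
    using that by (auto simp: mult_le_0_iff)
  consider "x \<le> 0" "y \<le> 0" | "(x \<le> 0) \<noteq> (y \<le> 0)" | "0 < x" "0 < y"
    by linarith
  then show ?thesis
  proof cases
    case 1
    then have "(min y 0)\<^sup>2 - (min x 0)\<^sup>2 - 2 * min x 0 * (y - x) = (y - x)\<^sup>2"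
      by (simp add: min_def power2_eq_square algebra_simps)
    then show ?thesis
      by simp
  next
    case 2
    with xy have "0 \<le> x * x - 2 * (x * y)"
      using zero_le_square[of x] by linarith
    with 2 show ?thesis
      by (cases "x \<le> 0") (simp_all add: min_def power2_eq_square algebra_simps)
  next
    case 3
    then show ?thesis
      by (simp add: min_def)
  qed
qed

lemma negpart_sq_has_real_derivative:
  "((\<lambda>x::real. (min x 0)\<^sup>2) has_real_derivative 2 * min x 0) (at x)"
proof -
  define err where "err y = (min y 0)\<^sup>2 - (min x 0)\<^sup>2 - 2 * min x 0 * (y - x)" for y
  have "((\<lambda>y. err y / (y - x)) \<longlongrightarrow> 0) (at x)"
  proof (rule Lim_null_comparison)
    show "\<forall>\<^sub>F y in at x. norm (err y / (y - x)) \<le> \<bar>y - x\<bar>"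
      using negpart_sq_taylor unfolding err_def
      by (auto simp: abs_divide power2_eq_square divide_le_eq intro!: always_eventually)
    show "((\<lambda>y. \<bar>y - x\<bar>) \<longlongrightarrow> 0) (at x)"
      by (intro tendsto_eq_intros) auto
  qed
  then have "((\<lambda>y. 2 * min x 0 + err y / (y - x)) \<longlongrightarrow> 2 * min x 0) (at x)"
    using tendsto_add[OF tendsto_const] by fastforce
  moreover have "\<forall>\<^sub>F y in at x. 2 * min x 0 + err y / (y - x) = ((min y 0)\<^sup>2 - (min x 0)\<^sup>2) / (y - x)"
    unfolding eventually_at_filter err_def by (simp add: field_simps)
  ultimately show ?thesis
    unfolding has_field_derivative_iff by (rule Lim_transform_eventually)
qed

lemma nonneg_real_induct:
  fixes P :: "real \<Rightarrow> bool"
  assumes step: "\<And>s. 0 \<le> s \<Longrightarrow> (\<And>r. 0 \<le> r \<Longrightarrow> r < s \<Longrightarrow> P r) \<Longrightarrow> \<exists>e>s. \<forall>r\<in>{s..e}. P r"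
    and "0 \<le> t"
  shows "P t"
proof (rule ccontr)
  assume "\<not> P t"
  define B where "B = {r. 0 \<le> r \<and> \<not> P r}"
  have "t \<in> B" "bdd_below B" using \<open>\<not> P t\<close> \<open>0 \<le> t\<close> by (auto simp: B_def bdd_below_def)
  define s where "s = Inf B"
  have "0 \<le> s" unfolding s_def using \<open>t \<in> B\<close> by (auto intro!: cInf_greatest simp: B_def)
  moreover have "P r" if "0 \<le> r" "r < s" for r
    using that cInf_lower[OF _ \<open>bdd_below B\<close>, of r] by (auto simp: B_def s_def)
  ultimately obtain e where "e > s" "\<forall>r\<in>{s..e}. P r" using step by blast
  have "e \<le> r" if "r \<in> B" for r
  proof (rule ccontr)
    assume "\<not> e \<le> r"
    moreover have "s \<le> r" using that cInf_lower[OF _ \<open>bdd_below B\<close>] s_def by blast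
    ultimately show False using that \<open>\<forall>r\<in>{s..e}. P r\<close> by (auto simp: B_def)
  qed
  then have "e \<le> s" unfolding s_def using \<open>t \<in> B\<close> by (intro cInf_greatest) auto
  with \<open>e > s\<close> show False by simp
qed

lemma deriv_le_linear_imp_nonpos:
  fixes f f' :: "real \<Rightarrow> real"
  assumes deriv: "\<And>y. y \<in> {a..b} \<Longrightarrow> (f has_real_derivative f' y) (at y within {a..b})"
    and bound: "\<And>y. y \<in> {a..b} \<Longrightarrow> f' y \<le> k * f y"
    and "f a \<le> 0" and x: "x \<in> {a..b}"
  shows "f x \<le> 0"
proof -
  define g where "g y = f y * exp (- k * y)" for y
  have g_deriv: "(g has_real_derivative (f' y - k * f y) * exp (- k * y)) (at y within {a..b})"
    if "y \<in> {a..b}" for y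
    unfolding g_def using deriv[OF that]
    by (auto intro!: derivative_eq_intros simp: algebra_simps)
  have "g x \<le> g a"
  proof (rule DERIV_nonpos_imp_decreasing_open[of a x g])
    show "\<exists>g'. (g has_real_derivative g') (at y) \<and> g' \<le> 0" if "a < y" "y < x" for y
      using g_deriv[of y] bound[of y] that x
      by (intro exI[of _ "(f' y - k * f y) * exp (- k * y)"]) (simp add: at_within_Icc_at mult_nonpos_nonneg)
    show "continuous_on {a..x} g"
      using DERIV_continuous_on[OF g_deriv] by (rule continuous_on_subset) (use x in auto)
  qed (use x in auto)
  moreover have "g a \<le> 0"
    unfolding g_def using \<open>f a \<le> 0\<close> by (simp add: mult_nonpos_nonneg)
  ultimately have "f x * exp (- k * x) \<le> 0"
    unfolding g_def by linarith
  then show ?thesis by (simp add: mult_le_0_iff)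
qed

lemma gt_on_right_interval:
  fixes f :: "real \<Rightarrow> real"
  assumes "(f \<longlongrightarrow> f s) (at_right s)" and "c < f s"
  shows "\<exists>e>s. \<forall>r\<in>{s..e}. c < f r"
proof -
  have "\<forall>\<^sub>F r in at_right s. c < f r"
    using order_tendstoD(1)[OF assms] .
  then obtain u where "s < u" and u: "\<And>r. s < r \<Longrightarrow> r < u \<Longrightarrow> c < f r"
    unfolding eventually_at_right_field by blast
  have "c < f r" if "r \<in> {s..(s + u) / 2}" for r
  proof (cases "r = s")
    case False
    with that \<open>s < u\<close> show ?thesis
      by (intro u) auto
  qed (use assms(2) in simp)
  with \<open>s < u\<close> show ?thesis
    by (intro exI[of _ "(s + u) / 2"]) auto
qed

lemma ln_le_tangent:
  fixes x c :: real
  assumes "0 < x" and "0 < c"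
  shows "ln x \<le> ln c + x / c - 1"
  using ln_le_minus_one[of "x / c"] assms by (simp add: ln_div)

lemma mult_sq_le_of_abs_le_div_sqrt:
  fixes x M :: real
  assumes "0 < d" and "\<bar>x\<bar> \<le> M / sqrt (real d)"
  shows "real d * x\<^sup>2 \<le> M\<^sup>2"
proof -
  have "\<bar>x\<bar> \<le> \<bar>M / sqrt (real d)\<bar>"
    using assms(2) by linarith
  then have "x\<^sup>2 \<le> (M / sqrt (real d))\<^sup>2"
    by (simp only: abs_le_square_iff)
  with assms(1) show ?thesis
    by (simp add: power_divide field_simps)
qed

section \<open>Spectral data\<close>

lemma eigenvalue_nonneg_if_psd:
  fixes K :: "real mat" and w :: "real vec"
  assumes "w \<in> carrier_vec n" and "w \<bullet> w = 1" and "K *\<^sub>v w = l \<cdot>\<^sub>v w"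
    and "0 \<le> w \<bullet> (K *\<^sub>v w)"
  shows "0 \<le> l"
  using assms by simp

lemma eigenvalue_le_if_bounded:
  fixes K :: "real mat" and w :: "real vec"
  assumes "w \<in> carrier_vec n" and "w \<bullet> w = 1" and "K *\<^sub>v w = l \<cdot>\<^sub>v w"
    and "(K *\<^sub>v w) \<bullet> (K *\<^sub>v w) \<le> L\<^sup>2 * (w \<bullet> w)"
  shows "l \<le> \<bar>L\<bar>"
proof -
  have "l\<^sup>2 \<le> L\<^sup>2"
    using assms by (simp add: power2_eq_square)
  then have "\<bar>l\<bar> \<le> \<bar>L\<bar>"
    by (simp add: abs_le_square_iff)
  then show ?thesis
    by simp
qed

lemma mat_trace_eq_sum_eigenvalues:
  fixes K :: "real mat" and w :: "nat \<Rightarrow> real vec" and lam :: "nat \<Rightarrow> real"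
  assumes K: "K \<in> carrier_mat d d"
    and w: "\<And>i. i < d \<Longrightarrow> w i \<in> carrier_vec d"
    and orth: "\<And>i j. i < d \<Longrightarrow> j < d \<Longrightarrow> w i \<bullet> w j = (if i = j then 1 else 0)"
    and eig: "\<And>i. i < d \<Longrightarrow> K *\<^sub>v w i = lam i \<cdot>\<^sub>v w i"
  shows "mat_trace K = (\<Sum>i<d. lam i)"
proof -
  define W where "W = mat d d (\<lambda>(i, k). w k $ i)"
  have W: "W \<in> carrier_mat d d" "transpose_mat W \<in> carrier_mat d d"
    unfolding W_def by auto
  have "transpose_mat W * W = 1\<^sub>m d"
  proof (rule eq_matI)
    fix k l
    assume "k < dim_row (1\<^sub>m d)" and "l < dim_col (1\<^sub>m d)"
    then have "k < d" "l < d"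
      by auto
    then have "(transpose_mat W * W) $$ (k, l) = w k \<bullet> w l"
      using w[of l] unfolding W_def by (simp add: scalar_prod_def atLeast0LessThan)
    with \<open>k < d\<close> \<open>l < d\<close> show "(transpose_mat W * W) $$ (k, l) = 1\<^sub>m d $$ (k, l)"
      by (simp add: orth)
  qed (use W in auto)
  \<comment> \<open>a square matrix with orthonormal columns also has orthonormal rows\<close>
  then have WWt: "W * transpose_mat W = 1\<^sub>m d"
    using mat_mult_left_right_inverse[OF W(2,1)] by simp
  have rows: "(\<Sum>k<d. w k $ i * w k $ j) = (if i = j then 1 else 0)" if "i < d" "j < d" for i j
  proof -
    have "(\<Sum>k<d. w k $ i * w k $ j) = (W * transpose_mat W) $$ (i, j)"
      using that unfolding W_def by (simp add: scalar_prod_def atLeast0LessThan)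
    with that show ?thesis
      by (simp add: WWt)
  qed
  have lam: "lam k = (\<Sum>i<d. \<Sum>j<d. w k $ i * K $$ (i, j) * w k $ j)" if "k < d" for k
  proof -
    have "lam k = w k \<bullet> (K *\<^sub>v w k)"
      using eig[OF that] w[OF that] orth[OF that that] by simp
    also have "\<dots> = (\<Sum>i<d. \<Sum>j<d. w k $ i * K $$ (i, j) * w k $ j)"
      using K w[OF that]
      by (simp add: scalar_prod_def atLeast0LessThan sum_distrib_left mult.assoc)
    finally show ?thesis .
  qed
  have "(\<Sum>k<d. lam k) = (\<Sum>k<d. \<Sum>i<d. \<Sum>j<d. w k $ i * K $$ (i, j) * w k $ j)"
    by (rule sum.cong) (simp_all add: lam)
  also have "\<dots> = (\<Sum>i<d. \<Sum>j<d. K $$ (i, j) * (\<Sum>k<d. w k $ i * w k $ j))"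
    by (subst sum.swap, rule sum.cong, simp, subst sum.swap, rule sum.cong, simp)
      (simp add: sum_distrib_left algebra_simps)
  also have "\<dots> = (\<Sum>i<d. K $$ (i, i))"
    by (simp add: rows if_distrib sum.delta cong: if_cong)
  finally show ?thesis
    using K unfolding mat_trace_def by simp
qed

section \<open>Nonnegativity of the flow\<close>

text \<open>With \<open>g = \<gamma>\<^sub>t\<close> and \<open>q = \<gamma>\<^sub>t\<^sup>2\<close> the left-hand side is the time derivative of
  \<open>\<Sum>\<^sub>i (min D\<^sub>i 0)\<^sup>2\<close>.  Where \<open>D\<^sub>i < 0\<close> the risk is at least its part
  \<open>(1/2d) \<Sum>\<^sub>j \<lambda>\<^sub>j min D\<^sub>j 0\<close> coming from the negative parts, which closes the estimate.\<close>

lemma sum_negpart_mult_rate_le: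
  fixes lam D :: "nat \<Rightarrow> real"
  assumes d: "0 < d" and g: "0 \<le> g" and q: "0 \<le> q"
    and lam_nonneg: "\<And>i. i < d \<Longrightarrow> 0 \<le> lam i" and lam_le: "\<And>i. i < d \<Longrightarrow> lam i \<le> Lb"
  shows "(\<Sum>i<d. 2 * min (D i) 0 * (- 2 * g * lam i * D i
            + 2 * q * lam i * ((1 / (2 * real d)) * (\<Sum>j<d. lam j * D j))))
         \<le> 2 * q * Lb\<^sup>2 * (\<Sum>i<d. (min (D i) 0)\<^sup>2)"
proof -
  define m where "m i = min (D i) 0" for i
  define S where "S = (\<Sum>j<d. m j)"
  define \<rho> where "\<rho> = (1 / (2 * real d)) * (\<Sum>j<d. lam j * D j)"
  have m_nonpos: "m i \<le> 0" for i
    by (simp add: m_def)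
  have Lb: "0 \<le> Lb"
    using lam_nonneg[OF d] lam_le[OF d] by linarith
  have cross_le: "m i * \<rho> \<le> Lb / (2 * real d) * (m i * S)" if "i < d" for i
  proof -
    have "(\<Sum>j<d. lam j * m j) \<le> (\<Sum>j<d. lam j * D j)"
      by (intro sum_mono mult_left_mono) (auto simp: m_def lam_nonneg)
    then have "(\<Sum>j<d. lam j * D j) * m i \<le> (\<Sum>j<d. lam j * m j) * m i"
      by (rule mult_right_mono_neg[OF _ m_nonpos])
    also have "\<dots> = (\<Sum>j<d. lam j * (m j * m i))"
      by (simp add: sum_distrib_right mult.assoc)
    finally have "m i * \<rho> \<le> (1 / (2 * real d)) * (\<Sum>j<d. lam j * (m j * m i))"
      unfolding \<rho>_def using d by (simp add: mult.commute divide_right_mono)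
    also have "\<dots> \<le> (1 / (2 * real d)) * (\<Sum>j<d. Lb * (m j * m i))"
      by (intro mult_left_mono sum_mono mult_right_mono lam_le)
        (auto simp: m_nonpos mult_nonpos_nonpos)
    finally show ?thesis
      by (simp add: S_def sum_distrib_left sum_distrib_right mult_ac)
  qed
  have term_le: "2 * m i * (- 2 * g * lam i * D i + 2 * q * lam i * \<rho>)
      \<le> 2 * q * Lb\<^sup>2 / real d * (m i * S)" if "i < d" for i
  proof -
    have "0 \<le> g * lam i * (m i * D i)"
      using g lam_nonneg[OF that] by (simp add: m_def min_def mult_nonpos_nonpos)
    moreover have "0 \<le> Lb / (2 * real d) * (m i * S)"
      using Lb by (simp add: S_def m_nonpos mult_nonpos_nonpos sum_nonpos)
    then have "lam i * (m i * \<rho>) \<le> Lb * (Lb / (2 * real d) * (m i * S))"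
      using mult_left_mono[OF cross_le[OF that] lam_nonneg[OF that]] mult_right_mono[OF lam_le[OF that]]
      by (meson order_trans)
    then have "q * (lam i * (m i * \<rho>)) \<le> q * (Lb * (Lb / (2 * real d) * (m i * S)))"
      using q by (rule mult_left_mono)
    moreover have "2 * m i * (- 2 * g * lam i * D i + 2 * q * lam i * \<rho>)
        = 4 * (q * (lam i * (m i * \<rho>))) - 4 * (g * lam i * (m i * D i))"
      by (simp add: algebra_simps)
    ultimately have "2 * m i * (- 2 * g * lam i * D i + 2 * q * lam i * \<rho>)
        \<le> 4 * (q * (Lb * (Lb / (2 * real d) * (m i * S))))"
      by linarith
    also have "\<dots> = 2 * q * Lb\<^sup>2 / real d * (m i * S)"
      by (simp add: power2_eq_square)
    finally show ?thesis .
  qed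
  have "(\<Sum>i<d. 2 * m i * (- 2 * g * lam i * D i + 2 * q * lam i * \<rho>))
        \<le> (\<Sum>i<d. 2 * q * Lb\<^sup>2 / real d * (m i * S))"
    by (intro sum_mono term_le) simp
  also have "\<dots> = 2 * q * Lb\<^sup>2 / real d * S\<^sup>2"
    by (simp add: S_def sum_distrib_left sum_distrib_right power2_eq_square mult.commute)
  also have "\<dots> \<le> 2 * q * Lb\<^sup>2 / real d * (real d * (\<Sum>i<d. (m i)\<^sup>2))"
    using sum_squared_le_sum_of_squares[of m "{..<d}"] q
    by (intro mult_left_mono) (auto simp: S_def mult_ac)
  finally show ?thesis
    using d by (simp add: m_def \<rho>_def)
qed

locale adagrad_norm_flow =
  fixes d :: nat and eta b Lb trK :: real
    and lam :: "nat \<Rightarrow> real" and Dsq :: "nat \<Rightarrow> real \<Rightarrow> real"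
  assumes d_pos: "0 < d" and eta_pos: "0 < eta" and b_pos: "0 < b"
    and lam_nonneg: "\<And>i. i < d \<Longrightarrow> 0 \<le> lam i"
    and lam_le: "\<And>i. i < d \<Longrightarrow> lam i \<le> Lb"
    and trK_eq: "trK = (\<Sum>i<d. lam i)"
    and Dsq_init_nonneg: "\<And>i. i < d \<Longrightarrow> 0 \<le> Dsq i 0"
    and Dsq_ode: "\<And>i t. i < d \<Longrightarrow> 0 \<le> t \<Longrightarrow> (Dsq i has_real_derivative
          (- 2 * adagrad_norm_lr eta b trK d (risk d lam Dsq) t * lam i * Dsq i t
           + 2 * (adagrad_norm_lr eta b trK d (risk d lam Dsq) t)\<^sup>2 * lam i * risk d lam Dsq t))
          (at t within {0..})"
begin

abbreviation R :: "real \<Rightarrow> real" where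
  "R \<equiv> risk d lam Dsq"

abbreviation lr :: "real \<Rightarrow> real" where
  "lr \<equiv> adagrad_norm_lr eta b trK d R"

text \<open>Nothing excludes \<open>accum t < 0\<close> a priori, where \<open>sqrt\<close> is negative and \<open>lr\<close> is junk;
  this is why the positivity of the \<open>Dsq i\<close> has to be established first.\<close>

definition accum :: "real \<Rightarrow> real" where
  "accum t = b\<^sup>2 + 2 * trK / real d * integral {0..t} R"

definition Dsq_rate :: "nat \<Rightarrow> real \<Rightarrow> real" where
  "Dsq_rate i t = - 2 * lr t * lam i * Dsq i t + 2 * (lr t)\<^sup>2 * lam i * R t"

lemma lr_eq: "lr t = eta / sqrt (accum t)"
  by (simp add: adagrad_norm_lr_def accum_def)

lemma Dsq_has_derivative:
  "i < d \<Longrightarrow> 0 \<le> t \<Longrightarrow> (Dsq i has_real_derivative Dsq_rate i t) (at t within {0..})"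
  unfolding Dsq_rate_def by (rule Dsq_ode)

lemma continuous_on_Dsq: "i < d \<Longrightarrow> continuous_on {0..} (Dsq i)"
  using Dsq_has_derivative by (intro DERIV_continuous_on) auto

lemma continuous_on_R: "continuous_on {0..} R"
  unfolding risk_def by (intro continuous_intros continuous_on_Dsq) auto

lemma R_nonneg: "(\<And>i. i < d \<Longrightarrow> 0 \<le> Dsq i t) \<Longrightarrow> 0 \<le> R t"
  unfolding risk_def using lam_nonneg by (auto intro!: sum_nonneg divide_nonneg_nonneg)

lemma trK_nonneg: "0 \<le> trK"
  unfolding trK_eq using lam_nonneg by (auto intro: sum_nonneg)

lemma trK_le: "trK \<le> real d * Lb"
  unfolding trK_eq using sum_bounded_above[of "{..<d}" lam Lb] lam_le by auto

lemma accum_has_derivative: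
  assumes "0 \<le> t"
  shows "(accum has_real_derivative 2 * trK / real d * R t) (at t within {0..})"
proof -
  have "((\<lambda>s. integral {0..s} R) has_real_derivative R t) (at t within {0..t + 1})"
    using assms continuous_on_subset[OF continuous_on_R]
    by (intro integral_has_real_derivative) auto
  moreover have "at t within {0..t + 1} = at t within {0..}"
    by (rule at_within_nhd[of _ "{..<t + 1}"]) (use assms in auto)
  ultimately show ?thesis
    unfolding accum_def using d_pos by (auto intro!: derivative_eq_intros)
qed

lemma continuous_on_accum: "continuous_on {0..} accum"
  using accum_has_derivative by (intro DERIV_continuous_on) auto

lemma b_sq_le_accum_if_Dsq_nonneg:
  assumes "0 \<le> t" and "\<And>s i. s \<in> {0..t} \<Longrightarrow> i < d \<Longrightarrow> 0 \<le> Dsq i s"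
  shows "b\<^sup>2 \<le> accum t"
proof -
  have "0 \<le> integral {0..t} R"
    using assms continuous_on_subset[OF continuous_on_R]
    by (intro integral_nonneg integrable_continuous_interval R_nonneg) auto
  then show ?thesis
    unfolding accum_def using trK_nonneg by simp
qed

definition negpart_energy :: "real \<Rightarrow> real" where
  "negpart_energy t = (\<Sum>i<d. (min (Dsq i t) 0)\<^sup>2)"

lemma negpart_energy_has_derivative:
  "0 \<le> t \<Longrightarrow> (negpart_energy has_real_derivative (\<Sum>i<d. 2 * min (Dsq i t) 0 * Dsq_rate i t))
     (at t within {0..})"
  unfolding negpart_energy_def
  by (intro DERIV_sum DERIV_chain2[OF negpart_sq_has_real_derivative Dsq_has_derivative]) auto

lemma negpart_energy_rate_le:
  assumes "b\<^sup>2 / 2 \<le> accum t"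
  shows "(\<Sum>i<d. 2 * min (Dsq i t) 0 * Dsq_rate i t)
           \<le> 4 * eta\<^sup>2 * Lb\<^sup>2 / b\<^sup>2 * negpart_energy t"
proof -
  have "0 < b\<^sup>2"
    using b_pos by simp
  with assms have accum_t_pos: "0 < accum t"
    by linarith
  then have "(lr t)\<^sup>2 = eta\<^sup>2 / accum t"
    by (simp add: lr_eq power_divide)
  also have "\<dots> \<le> eta\<^sup>2 / (b\<^sup>2 / 2)"
    using assms b_pos accum_t_pos by (intro divide_left_mono) auto
  also have "\<dots> = 2 * eta\<^sup>2 / b\<^sup>2"
    by simp
  finally have "(lr t)\<^sup>2 \<le> 2 * eta\<^sup>2 / b\<^sup>2" .
  have "0 \<le> lr t"
    using accum_t_pos eta_pos by (simp add: lr_eq)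
  then have "(\<Sum>i<d. 2 * min (Dsq i t) 0 * Dsq_rate i t) \<le> 2 * (lr t)\<^sup>2 * Lb\<^sup>2 * negpart_energy t"
    unfolding Dsq_rate_def negpart_energy_def risk_def
    by (intro sum_negpart_mult_rate_le d_pos lam_nonneg lam_le) auto
  also have "\<dots> \<le> 2 * (2 * eta\<^sup>2 / b\<^sup>2) * Lb\<^sup>2 * negpart_energy t"
    using \<open>(lr t)\<^sup>2 \<le> _\<close> unfolding negpart_energy_def
    by (intro mult_right_mono mult_left_mono sum_nonneg) auto
  finally show ?thesis
    by simp
qed

lemma Dsq_nonneg_if_negpart_energy_nonpos:
  assumes "negpart_energy t \<le> 0" and "i < d"
  shows "0 \<le> Dsq i t"
proof -
  have "(min (Dsq i t) 0)\<^sup>2 \<le> negpart_energy t"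
    unfolding negpart_energy_def using assms(2)
    by (intro member_le_sum) auto
  with assms(1) have "(min (Dsq i t) 0)\<^sup>2 \<le> 0"
    by linarith
  then show ?thesis
    by (simp add: min_def split: if_splits)
qed

lemma Dsq_nonneg_upto:
  assumes s: "0 \<le> s" and below: "\<And>r i. 0 \<le> r \<Longrightarrow> r < s \<Longrightarrow> i < d \<Longrightarrow> 0 \<le> Dsq i r"
    and "r \<in> {0..s}" and "i < d"
  shows "0 \<le> Dsq i r"
proof (cases "s = 0")
  case True
  with assms Dsq_init_nonneg show ?thesis
    by auto
next
  case False
  then have "closure {0..<s} = {0..s}"
    using s by simp
  then show ?thesis
    using continuous_ge_on_closure[of "{0..<s}" "Dsq i" r 0] assms
      continuous_on_subset[OF continuous_on_Dsq[OF \<open>i < d\<close>]] by auto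
qed

lemma accum_gt_half_near:
  assumes s: "0 \<le> s" and "b\<^sup>2 \<le> accum s"
  shows "\<exists>e>s. \<forall>r\<in>{s..e}. b\<^sup>2 / 2 < accum r"
proof (rule gt_on_right_interval)
  have "(accum \<longlongrightarrow> accum s) (at s within {0..})"
    using continuous_on_accum s by (simp add: continuous_on_def)
  then show "(accum \<longlongrightarrow> accum s) (at_right s)"
    by (rule tendsto_within_subset) (use s in auto)
  have "0 < b\<^sup>2"
    using b_pos by simp
  with assms(2) show "b\<^sup>2 / 2 < accum s"
    by linarith
qed

text \<open>On a short interval after \<open>s\<close> the accumulator stays above \<open>b\<^sup>2 / 2\<close>, so the learning
  rate is bounded there and Gronwall applies to the negative-part energy, which vanishes at \<open>s\<close>.\<close>

lemma Dsq_nonneg_extend: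
  assumes s: "0 \<le> s" and below: "\<And>r i. 0 \<le> r \<Longrightarrow> r < s \<Longrightarrow> i < d \<Longrightarrow> 0 \<le> Dsq i r"
  shows "\<exists>e>s. \<forall>r\<in>{s..e}. \<forall>i<d. 0 \<le> Dsq i r"
proof -
  have nonneg_upto: "0 \<le> Dsq i r" if "r \<in> {0..s}" "i < d" for r i
    using Dsq_nonneg_upto[OF s below that] .
  then have "b\<^sup>2 \<le> accum s"
    by (intro b_sq_le_accum_if_Dsq_nonneg[OF s])
  then obtain e where "s < e" and e: "\<forall>r\<in>{s..e}. b\<^sup>2 / 2 < accum r"
    using accum_gt_half_near[OF s] by blast
  have "negpart_energy r \<le> 0" if "r \<in> {s..e}" for r
  proof (rule deriv_le_linear_imp_nonpos[OF _ _ _ that])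
    show "(negpart_energy has_real_derivative (\<Sum>i<d. 2 * min (Dsq i y) 0 * Dsq_rate i y))
        (at y within {s..e})" if "y \<in> {s..e}" for y
      using that s by (intro has_field_derivative_subset[OF negpart_energy_has_derivative]) auto
    show "(\<Sum>i<d. 2 * min (Dsq i y) 0 * Dsq_rate i y) \<le> 4 * eta\<^sup>2 * Lb\<^sup>2 / b\<^sup>2 * negpart_energy y"
      if "y \<in> {s..e}" for y
      using e that by (intro negpart_energy_rate_le less_imp_le) blast
    show "negpart_energy s \<le> 0"
      unfolding negpart_energy_def using nonneg_upto s by (subst sum.neutral) (auto simp: min_absorb2)
  qed
  with \<open>s < e\<close> show ?thesis
    by (intro exI[of _ e]) (auto intro: Dsq_nonneg_if_negpart_energy_nonpos)
qed

lemma Dsq_nonneg: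
  assumes "0 \<le> t" and "i < d"
  shows "0 \<le> Dsq i t"
proof -
  have "\<forall>j<d. 0 \<le> Dsq j t"
  proof (rule nonneg_real_induct[where P = "\<lambda>r. \<forall>j<d. 0 \<le> Dsq j r", OF _ assms(1)])
    fix s
    assume "0 \<le> s" and "\<And>r. 0 \<le> r \<Longrightarrow> r < s \<Longrightarrow> \<forall>j<d. 0 \<le> Dsq j r"
    then show "\<exists>e>s. \<forall>r\<in>{s..e}. \<forall>j<d. 0 \<le> Dsq j r"
      by (intro Dsq_nonneg_extend) auto
  qed
  with assms(2) show ?thesis
    by blast
qed

lemma b_sq_le_accum: "0 \<le> t \<Longrightarrow> b\<^sup>2 \<le> accum t"
  using b_sq_le_accum_if_Dsq_nonneg Dsq_nonneg by auto

lemma accum_pos: "0 \<le> t \<Longrightarrow> 0 < accum t"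
  using b_sq_le_accum[of t] b_pos by (meson order_less_le_trans zero_less_power)

section \<open>The conserved energy\<close>

definition mean_Dsq :: "real \<Rightarrow> real" where
  "mean_Dsq t = (\<Sum>i<d. Dsq i t) / real d"

definition energy :: "real \<Rightarrow> real" where
  "energy t = trK / real d * mean_Dsq t + 4 * eta * sqrt (accum t)
     - eta\<^sup>2 * (trK / real d) * ln (accum t)"

lemma energy_has_derivative:
  assumes "0 \<le> t"
  shows "(energy has_real_derivative 0) (at t within {0..})"
proof -
  define u where "u = sqrt (accum t)"
  have u: "0 < u" "accum t = u\<^sup>2" "lr t = eta / u"
    using accum_pos[OF assms] by (auto simp: u_def lr_eq)
  have "(\<Sum>i<d. lam i * Dsq i t) = 2 * real d * R t"
    unfolding risk_def using d_pos by simp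
  moreover have "(\<Sum>i<d. Dsq_rate i t)
      = - 2 * lr t * (\<Sum>i<d. lam i * Dsq i t) + 2 * (lr t)\<^sup>2 * R t * (\<Sum>i<d. lam i)"
    unfolding Dsq_rate_def by (simp add: sum_subtractf sum_distrib_left sum_distrib_right mult_ac)
  ultimately have sum_rate: "(\<Sum>i<d. Dsq_rate i t) = - 4 * real d * lr t * R t + 2 * (lr t)\<^sup>2 * R t * trK"
    by (simp add: trK_eq)
  have "trK / real d * ((\<Sum>i<d. Dsq_rate i t) / real d)
      + 4 * eta * (inverse (sqrt (accum t)) / 2 * (2 * trK / real d * R t))
      - eta\<^sup>2 * (trK / real d) * (inverse (accum t) * (2 * trK / real d * R t)) = 0"
    unfolding sum_rate u_def[symmetric] u(2,3) using u(1) d_pos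
    by (simp add: field_simps power2_eq_square)
  moreover have "(energy has_real_derivative
      trK / real d * ((\<Sum>i<d. Dsq_rate i t) / real d)
      + 4 * eta * (inverse (sqrt (accum t)) / 2 * (2 * trK / real d * R t))
      - eta\<^sup>2 * (trK / real d) * (inverse (accum t) * (2 * trK / real d * R t)))
      (at t within {0..})"
    unfolding energy_def mean_Dsq_def using assms accum_pos[OF assms]
    by (intro DERIV_diff DERIV_add DERIV_cmult DERIV_cdivide DERIV_sum Dsq_has_derivative
        DERIV_chain2[OF DERIV_real_sqrt accum_has_derivative]
        DERIV_chain2[OF DERIV_ln accum_has_derivative]) auto
  ultimately show ?thesis
    by simp
qed

lemma energy_eq_initial: "0 \<le> t \<Longrightarrow> energy t = energy 0"
  using has_field_derivative_zero_constant[of "{0..}" energy] energy_has_derivative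
  by (metis atLeast_iff convex_real_interval(1) order_refl)

lemma mean_Dsq_nonneg: "0 \<le> t \<Longrightarrow> 0 \<le> mean_Dsq t"
  unfolding mean_Dsq_def using Dsq_nonneg by (intro divide_nonneg_nonneg sum_nonneg) auto

lemma sqrt_accum_eq:
  assumes "0 \<le> t"
  shows "4 * eta * (sqrt (accum t) - b)
           = trK / real d * (mean_Dsq 0 - mean_Dsq t)
             + 2 * eta\<^sup>2 * (trK / real d) * (ln (sqrt (accum t)) - ln b)"
proof -
  have "ln (accum t) = 2 * ln (sqrt (accum t))"
    using accum_pos[OF assms] by (simp add: ln_sqrt)
  moreover have "ln (accum 0) = 2 * ln b"
    using b_pos by (simp add: accum_def ln_realpow)
  moreover have "sqrt (accum 0) = b"
    using b_pos by (simp add: accum_def)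
  ultimately show ?thesis
    using energy_eq_initial[OF assms] d_pos unfolding energy_def by (simp add: field_simps)
qed

lemma sqrt_accum_le:
  assumes F0: "mean_Dsq 0 \<le> F0" and t: "0 \<le> t"
  shows "2 * eta * sqrt (accum t)
           \<le> Lb * F0 + 2 * eta\<^sup>2 * Lb * ln (1 + eta * Lb / b) + 4 * eta * b"
proof -
  define T where "T = trK / real d"
  define u where "u = sqrt (accum t)"
  \<comment> \<open>tangent point for ln chosen so that the resulting term linear in u is absorbed by 4 eta u\<close>
  define c where "c = b + eta * Lb"
  have T: "0 \<le> T" "T \<le> Lb"
    using trK_nonneg trK_le d_pos by (auto simp: T_def divide_le_eq mult.commute)
  have u: "b \<le> u"
    using b_sq_le_accum[OF t] b_pos by (simp add: u_def real_le_rsqrt)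
  have "0 \<le> eta * Lb"
    using eta_pos T by simp
  then have c: "0 < c" "b \<le> c"
    using b_pos by (auto simp: c_def)
  have "ln c - ln b = ln (c / b)"
    using c b_pos by (simp add: ln_div)
  also have "c / b = 1 + eta * Lb / b"
    using b_pos by (simp add: c_def field_simps)
  finally have ln_c: "ln c - ln b = ln (1 + eta * Lb / b)" .
  have "ln u \<le> ln c + u / c - 1"
    using u b_pos c by (intro ln_le_tangent) auto
  then have "4 * eta * (u - b) \<le> T * F0 + 2 * eta\<^sup>2 * T * (ln c - ln b) + 2 * eta * u * (eta * T / c)"
    using sqrt_accum_eq[OF t] mult_left_mono[OF F0 T(1)] mult_nonneg_nonneg[OF T(1) mean_Dsq_nonneg[OF t]]
      mult_left_mono[of "ln u - ln b" "ln c - ln b + u / c" "2 * eta\<^sup>2 * T"] T(1)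
    unfolding T_def[symmetric] u_def[symmetric] by (simp add: algebra_simps power2_eq_square)
  also have "\<dots> \<le> Lb * F0 + 2 * eta\<^sup>2 * Lb * (ln c - ln b) + 2 * eta * u"
  proof -
    have "eta * T \<le> eta * Lb"
      using T eta_pos by (intro mult_left_mono) auto
    then have "eta * T / c \<le> 1"
      using c b_pos by (simp add: c_def)
    then have "2 * eta * u * (eta * T / c) \<le> 2 * eta * u"
      using eta_pos u b_pos by (intro mult_left_le) auto
    moreover have "T * F0 + 2 * eta\<^sup>2 * T * (ln c - ln b) \<le> Lb * F0 + 2 * eta\<^sup>2 * Lb * (ln c - ln b)"
      using T mean_Dsq_nonneg[of 0] F0 c b_pos
      by (intro add_mono mult_right_mono mult_left_mono) auto
    ultimately show ?thesis
      by linarith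
  qed
  finally show ?thesis
    unfolding u_def ln_c by (simp add: algebra_simps)
qed

lemma mean_Dsq_le: "(\<And>i. i < d \<Longrightarrow> Dsq i t \<le> F) \<Longrightarrow> mean_Dsq t \<le> F"
  unfolding mean_Dsq_def using d_pos sum_bounded_above[of "{..<d}" "\<lambda>i. Dsq i t" F]
  by (simp add: divide_le_eq mult.commute)

lemma lr_ge:
  assumes "mean_Dsq 0 \<le> F0" and "0 \<le> t"
  shows "2 * eta\<^sup>2 / (Lb * F0 + 2 * eta\<^sup>2 * Lb * ln (1 + eta * Lb / b) + 4 * eta * b) \<le> lr t"
proof -
  have "0 < 2 * eta * sqrt (accum t)"
    using accum_pos[OF assms(2)] eta_pos by simp
  with sqrt_accum_le[OF assms]
  have "2 * eta\<^sup>2 / (Lb * F0 + 2 * eta\<^sup>2 * Lb * ln (1 + eta * Lb / b) + 4 * eta * b)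
          \<le> 2 * eta\<^sup>2 / (2 * eta * sqrt (accum t))"
    by (intro divide_left_mono) auto
  also have "\<dots> = lr t"
    using eta_pos by (simp add: lr_eq power2_eq_square)
  finally show ?thesis .
qed

end

lemma adagrad_norm_flow_of_eigenbasis:
  fixes K :: "real mat" and w :: "nat \<Rightarrow> real vec"
  assumes "0 < d" and "0 < eta" and "0 < b" and K: "K \<in> carrier_mat d d"
    and psd: "\<And>x. x \<in> carrier_vec d \<Longrightarrow> 0 \<le> x \<bullet> (K *\<^sub>v x)"
    and bounded: "\<And>x. x \<in> carrier_vec d \<Longrightarrow> (K *\<^sub>v x) \<bullet> (K *\<^sub>v x) \<le> L\<^sup>2 * (x \<bullet> x)"
    and w: "\<And>i. i < d \<Longrightarrow> w i \<in> carrier_vec d"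
    and orth: "\<And>i j. i < d \<Longrightarrow> j < d \<Longrightarrow> w i \<bullet> w j = (if i = j then 1 else 0)"
    and eig: "\<And>i. i < d \<Longrightarrow> K *\<^sub>v w i = lam i \<cdot>\<^sub>v w i"
    and "\<And>i. i < d \<Longrightarrow> 0 \<le> Dsq i 0"
    and "\<And>i t. i < d \<Longrightarrow> 0 \<le> t \<Longrightarrow> (Dsq i has_real_derivative
          (- 2 * adagrad_norm_lr eta b (mat_trace K) d (risk d lam Dsq) t * lam i * Dsq i t
           + 2 * (adagrad_norm_lr eta b (mat_trace K) d (risk d lam Dsq) t)\<^sup>2 * lam i
               * risk d lam Dsq t))
          (at t within {0..})"
  shows "adagrad_norm_flow d eta b \<bar>L\<bar> (mat_trace K) lam Dsq"
proof
  show "0 \<le> lam i" if "i < d" for i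
    using orth[OF that that] psd[OF w[OF that]]
    by (intro eigenvalue_nonneg_if_psd[OF w[OF that] _ eig[OF that]]) auto
  show "lam i \<le> \<bar>L\<bar>" if "i < d" for i
    using orth[OF that that] bounded[OF w[OF that]]
    by (intro eigenvalue_le_if_bounded[OF w[OF that] _ eig[OF that]]) auto
  show "mat_trace K = (\<Sum>i<d. lam i)"
    by (rule mat_trace_eq_sum_eigenvalues[OF K w orth eig])
qed (fact assms)+

theorem proposition4:
  fixes K :: "nat \<Rightarrow> real mat"
    and Xstar X0 :: "nat \<Rightarrow> real vec"
    and lam :: "nat \<Rightarrow> nat \<Rightarrow> real"
    and w :: "nat \<Rightarrow> nat \<Rightarrow> real vec"
    and Dsq :: "nat \<Rightarrow> nat \<Rightarrow> real \<Rightarrow> real"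
    and eta b L C :: real
  assumes eta_pos: "eta > 0" and b_pos: "b > 0"
    and K_carrier: "\<And>d. K d \<in> carrier_mat d d"
    and K_sym: "\<And>d. transpose_mat (K d) = K d"
    and K_psd: "\<And>d x. x \<in> carrier_vec d \<Longrightarrow> x \<bullet> (K d *\<^sub>v x) \<ge> 0"
    and K_opnorm: "\<And>d x. x \<in> carrier_vec d \<Longrightarrow>
                     (K d *\<^sub>v x) \<bullet> (K d *\<^sub>v x) \<le> L\<^sup>2 * (x \<bullet> x)"
    and eig_carrier: "\<And>d i. i < d \<Longrightarrow> w d i \<in> carrier_vec d"
    and eig_orthonormal: "\<And>d i j. i < d \<Longrightarrow> j < d \<Longrightarrow>
                     w d i \<bullet> w d j = (if i = j then 1 else 0)"
    and eig_pair: "\<And>d i. i < d \<Longrightarrow> K d *\<^sub>v w d i = lam d i \<cdot>\<^sub>v w d i"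
    and Xstar_carrier: "\<And>d. Xstar d \<in> carrier_vec d"
    and C_pos: "C > 0"
    and few_small_eigs:
      "((\<lambda>d. real (card {i. i < d \<and> lam d i < C}) / real d) \<longlongrightarrow> 0) sequentially"
    and Xstar_coords: "\<exists>M. \<forall>\<^sub>F d in sequentially. \<forall>i<d. \<bar>Xstar d \<bullet> w d i\<bar> \<le> M / sqrt (real d)"
    and X0_zero: "\<And>d. X0 d = 0\<^sub>v d"
    and D_init: "\<And>d i. 0 < d \<Longrightarrow> i < d \<Longrightarrow>
                   Dsq d i 0 = real d * ((X0 d - Xstar d) \<bullet> w d i)\<^sup>2"
    and D_ode: "\<And>d i t. 0 < d \<Longrightarrow> i < d \<Longrightarrow> t \<ge> 0 \<Longrightarrow>
          (Dsq d i has_real_derivative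
             (- 2 * adagrad_norm_lr eta b (mat_trace (K d)) d (risk d (lam d) (Dsq d)) t
                  * lam d i * Dsq d i t
              + 2 * (adagrad_norm_lr eta b (mat_trace (K d)) d (risk d (lam d) (Dsq d)) t)\<^sup>2
                  * lam d i * risk d (lam d) (Dsq d) t)) (at t within {0..})"
  shows "\<exists>g. g > 0 \<and> (\<forall>\<^sub>F d in sequentially. \<forall>t>0.
            adagrad_norm_lr eta b (mat_trace (K d)) d (risk d (lam d) (Dsq d)) t > g)"
proof -
  obtain M where M: "\<forall>\<^sub>F d in sequentially. \<forall>i<d. \<bar>Xstar d \<bullet> w d i\<bar> \<le> M / sqrt (real d)"
    using Xstar_coords by blast
  define B where "B = \<bar>L\<bar> * M\<^sup>2 + 2 * eta\<^sup>2 * \<bar>L\<bar> * ln (1 + eta * \<bar>L\<bar> / b) + 4 * eta * b"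
  have "0 < B"
    unfolding B_def using eta_pos b_pos by (intro add_nonneg_pos) auto
  have "\<forall>\<^sub>F d in sequentially. \<forall>t>0.
          adagrad_norm_lr eta b (mat_trace (K d)) d (risk d (lam d) (Dsq d)) t > eta\<^sup>2 / B"
    using eventually_conj[OF M eventually_gt_at_top[of 0]]
  proof (rule eventually_mono, safe)
    fix d :: nat and t :: real
    assume coords: "\<forall>i<d. \<bar>Xstar d \<bullet> w d i\<bar> \<le> M / sqrt (real d)" and d: "0 < d" and "0 < t"
    have init: "Dsq d i 0 = real d * (Xstar d \<bullet> w d i)\<^sup>2" if "i < d" for i
      using D_init[OF d that] X0_zero Xstar_carrier eig_carrier[OF that]
      by (simp add: minus_scalar_prod_distrib[of _ d])
    interpret flow: adagrad_norm_flow d eta b "\<bar>L\<bar>" "mat_trace (K d)" "lam d" "Dsq d"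
      using init by (intro adagrad_norm_flow_of_eigenbasis[OF d eta_pos b_pos K_carrier K_psd K_opnorm
          eig_carrier eig_orthonormal eig_pair _ D_ode[OF d]]) auto
    have "flow.mean_Dsq 0 \<le> M\<^sup>2"
      using init mult_sq_le_of_abs_le_div_sqrt[OF d] coords by (intro flow.mean_Dsq_le) simp
    then have "2 * eta\<^sup>2 / B \<le> flow.lr t"
      unfolding B_def using \<open>0 < t\<close> by (intro flow.lr_ge) auto
    moreover have "eta\<^sup>2 / B < 2 * eta\<^sup>2 / B"
      using \<open>0 < B\<close> eta_pos by (simp add: divide_strict_right_mono)
    ultimately show "eta\<^sup>2 / B < flow.lr t"
      by linarith
  qed
  with \<open>0 < B\<close> eta_pos show ?thesis
    by (intro exI[of _ "eta\<^sup>2 / B"]) auto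
qed

end
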